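(* Let $p_1,\ldots,p_m\in[0,1]$, $\alpha\in[0,1]$, and let $h_\alpha$ and $d_\alpha$ be as in the context. Then for every nonempty $S\subseteq\{1,\ldots,m\}$, \[ d_\alpha(S)=\max_{1\le u\le |S|}\Big(1-u+\big|\{i\in S: h_\alpha p_i\le u\alpha\}\big|\Big). \]
   Context: Setting: $m$ hypotheses with $p$-values $p_1,\ldots,p_m\in[0,1]$. For $I\subseteq\{1,\ldots,m\}$ and $1\le i\le |I|$, $p_{(i:I)}$ denotes the $i$-th smallest value of $\{p_j: j\in I\}$ (as a multiset). The Simes local test rejects $I$ ($I\in\mathcal{U}_\alpha$) iff there is $1\le i\le |I|$ with $|I|\,p_{(i:I)}\le i\alpha$ (so $\emptyset\notin\mathcal{U}_\alpha$). Closed testing: $\mathcal{X}_\alpha=\{I: J\in\mathcal{U}_\alpha \text{ for all } J\supseteq I\}$ (all sets are subsets of $\{1,\ldots,m\}$). For $S\subseteq\{1,\ldots,m\}$, $t_\alpha(S)=\max\{|I|: I\subseteq S,\ I\notin\mathcal{X}_\alpha\}$ and $d_\alpha(S)=|S|-t_\alpha(S)$. Let $r_1,\ldots,r_m$ be a permutation with $p_{r_1}\le\cdots\le p_{r_m}$, $K_i=\{r_{m-i+1},\ldots,r_m\}$, and $h_\alpha=\max\{0\le i\le m: K_i\notin\mathcal{U}_\alpha\}$. *)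

theory Defs
  imports Complex_Main "HOL-Library.Multiset"
begin

definition pord :: "(nat \<Rightarrow> real) \<Rightarrow> nat \<Rightarrow> nat set \<Rightarrow> real" where
  "pord p i I = sorted_list_of_multiset (image_mset p (mset_set I)) ! (i - 1)"

definition simes_rej :: "(nat \<Rightarrow> real) \<Rightarrow> real \<Rightarrow> nat set \<Rightarrow> bool" where
  "simes_rej p \<alpha> I \<longleftrightarrow> (\<exists>i\<in>{1..card I}. real (card I) * pord p i I \<le> real i * \<alpha>)"

definition closed_rej :: "nat \<Rightarrow> (nat \<Rightarrow> real) \<Rightarrow> real \<Rightarrow> nat set \<Rightarrow> bool" where
  "closed_rej m p \<alpha> I \<longleftrightarrow>
     (\<forall>J. I \<subseteq> J \<and> J \<subseteq> {1..m} \<longrightarrow> simes_rej p \<alpha> J)"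

definition t_alpha :: "nat \<Rightarrow> (nat \<Rightarrow> real) \<Rightarrow> real \<Rightarrow> nat set \<Rightarrow> nat" where
  "t_alpha m p \<alpha> S = Max {card I | I. I \<subseteq> S \<and> \<not> closed_rej m p \<alpha> I}"

definition d_alpha :: "nat \<Rightarrow> (nat \<Rightarrow> real) \<Rightarrow> real \<Rightarrow> nat set \<Rightarrow> nat" where
  "d_alpha m p \<alpha> S = card S - t_alpha m p \<alpha> S"

definition Kset :: "nat \<Rightarrow> (nat \<Rightarrow> nat) \<Rightarrow> nat \<Rightarrow> nat set" where
  "Kset m r i = r ` {m - i + 1..m}"

definition h_alpha :: "nat \<Rightarrow> (nat \<Rightarrow> real) \<Rightarrow> real \<Rightarrow> (nat \<Rightarrow> nat) \<Rightarrow> nat" where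
  "h_alpha m p \<alpha> r = Max {i. i \<le> m \<and> \<not> simes_rej p \<alpha> (Kset m r i)}"

end

theory Submission
  imports Defs
begin

text \<open>In counting form, a set \<open>I\<close> lies in some non-rejected \<open>J \<subseteq> {1..m}\<close> exactly when, for
  every \<open>u \<ge> 1\<close>, fewer than \<open>u\<close> of the values \<open>h\<^sub>\<alpha> p\<^sub>j\<close> (\<open>j \<in> I\<close>) are at most \<open>u\<alpha>\<close>. One
  direction holds because among sets of a given size the set \<open>K\<^sub>k\<close> of largest p-values is the
  hardest to reject, so a non-rejected set has at most \<open>h\<^sub>\<alpha>\<close> elements; for the other, pad \<open>I\<close>
  with elements of \<open>K\<^bsub>h\<^sub>\<alpha>\<^esub>\<close> until it has \<open>h\<^sub>\<alpha>\<close> elements. Such an \<open>I \<subseteq> S\<close> has at most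
  \<open>u - 1\<close> elements with \<open>h\<^sub>\<alpha> p\<^sub>j \<le> u\<alpha>\<close>, and the elements of \<open>S\<close> with the largest p-values
  attain the minimum over \<open>u\<close> of the resulting bounds on \<open>|I|\<close>; this minimum is \<open>t\<^sub>\<alpha>(S)\<close>.\<close>

lemma sorted_nth_le_iff_length_filter:
  fixes xs :: "'a::linorder list"
  assumes "sorted xs" "i < length xs"
  shows "xs ! i \<le> x \<longleftrightarrow> Suc i \<le> length (filter (\<lambda>v. v \<le> x) xs)"
proof -
  let ?J = "{j. j < length xs \<and> xs ! j \<le> x}"
  have "Suc i \<le> card ?J" if "xs ! i \<le> x"
  proof -
    have "{0..i} \<subseteq> ?J"
      using assms that by (auto intro: order_trans[OF sorted_nth_mono[OF assms(1)]])
    then show ?thesis using card_mono[of ?J "{0..i}"] by auto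
  qed
  moreover have "card ?J \<le> i" if "\<not> xs ! i \<le> x"
  proof -
    have "?J \<subseteq> {0..<i}"
    proof
      fix j assume "j \<in> ?J"
      then show "j \<in> {0..<i}"
        using that sorted_nth_mono[OF assms(1), of i j] by (cases "i \<le> j") auto
    qed
    then show ?thesis using card_mono[of "{0..<i}" ?J] by auto
  qed
  ultimately show ?thesis by (force simp: length_filter_conv_card)
qed

lemma pord_le_iff:
  assumes "finite I" "1 \<le> i" "i \<le> card I"
  shows "pord p i I \<le> x \<longleftrightarrow> i \<le> card {j\<in>I. p j \<le> x}"
proof -
  define xs where "xs = sorted_list_of_multiset (image_mset p (mset_set I))"
  have ms: "mset xs = image_mset p (mset_set I)" by (simp add: xs_def)
  have len: "length xs = card I"
    by (metis ms size_image_mset size_mset size_mset_set)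
  have "length (filter (\<lambda>v. v \<le> x) xs) = size (filter_mset (\<lambda>v. v \<le> x) (mset xs))"
    by (metis mset_filter size_mset)
  also have "\<dots> = card {j\<in>I. p j \<le> x}"
    using assms(1) by (simp add: ms filter_mset_image_mset)
  finally show ?thesis
    using len sorted_nth_le_iff_length_filter[of xs "i - 1" x] assms
    by (auto simp: pord_def xs_def)
qed

lemma card_filter_add_card_filter_not:
  "finite A \<Longrightarrow> card {j\<in>A. P j} + card {j\<in>A. \<not> P j} = card A"
  by (subst card_Un_disjoint[symmetric]) (auto intro: arg_cong[where f = card])

lemma card_Diff_add_card: "finite A \<Longrightarrow> finite B \<Longrightarrow> card (A - B) + card B = card (A \<union> B)"
  by (metis Un_Diff_cancel2 card_Un_disjoint Diff_disjoint finite_Diff inf_commute)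

lemma nat_ivt_Suc_le:
  fixes f :: "nat \<Rightarrow> nat"
  assumes "a \<le> b" "f a \<le> y" "y \<le> f b" "\<And>s. a \<le> s \<Longrightarrow> s < b \<Longrightarrow> f (Suc s) \<le> Suc (f s)"
  shows "\<exists>s\<in>{a..b}. f s = y"
proof -
  have "y \<le> f b \<longrightarrow> (\<exists>s\<in>{a..b}. f s = y)"
    using assms(1)
  proof (induction b rule: dec_induct)
    case base
    show ?case using assms(2) by auto
  next
    case (step n)
    show ?case
    proof
      assume "y \<le> f (Suc n)"
      show "\<exists>s\<in>{a..Suc n}. f s = y"
      proof (cases "y \<le> f n")
        case True
        then show ?thesis using step.IH by fastforce
      next
        case False
        then have "f (Suc n) = y"
          using \<open>y \<le> f (Suc n)\<close> assms(4)[OF step.hyps] by linarith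
        then show ?thesis using step.hyps by auto
      qed
    qed
  qed
  then show ?thesis using assms(3) by blast
qed

lemma Max_diff_eq_diff_Min:
  fixes f :: "'a \<Rightarrow> 'b::linordered_ab_group_add"
  assumes "finite A" "A \<noteq> {}"
  shows "Max ((\<lambda>x. c - f x) ` A) = c - Min (f ` A)"
proof (rule Max_eqI)
  show "finite ((\<lambda>x. c - f x) ` A)" using assms(1) by simp
  show "y \<le> c - Min (f ` A)" if y: "y \<in> (\<lambda>x. c - f x) ` A" for y
  proof -
    obtain x where "x \<in> A" "y = c - f x" using y by blast
    moreover have "Min (f ` A) \<le> f x" using assms(1) \<open>x \<in> A\<close> by simp
    ultimately show ?thesis by simp
  qed
  have "Min (f ` A) \<in> f ` A" using assms by simp
  then obtain x where "x \<in> A" "f x = Min (f ` A)" by (metis imageE)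
  then show "c - Min (f ` A) \<in> (\<lambda>x. c - f x) ` A" by (intro image_eqI[where x = x]) simp_all
qed

text \<open>The Simes test with the factor \<open>|J|\<close> replaced by \<open>c\<close>. Indices \<open>i > |J|\<close> impose no
  condition, so acceptance by the genuine test is the case \<open>c = |J|\<close>.\<close>

definition simes_accept :: "(nat \<Rightarrow> real) \<Rightarrow> real \<Rightarrow> real \<Rightarrow> nat set \<Rightarrow> bool" where
  "simes_accept p \<alpha> c J \<longleftrightarrow> (\<forall>i\<ge>1. card {j\<in>J. c * p j \<le> real i * \<alpha>} < i)"

lemma not_simes_rej_iff_simes_accept:
  assumes "finite J"
  shows "\<not> simes_rej p \<alpha> J \<longleftrightarrow> simes_accept p \<alpha> (card J) J"
proof -
  have "real (card J) * pord p i J \<le> real i * \<alpha> \<longleftrightarrow>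
      i \<le> card {j\<in>J. real (card J) * p j \<le> real i * \<alpha>}" if i: "i \<in> {1..card J}" for i
  proof -
    have pos: "real (card J) > 0" using i by auto
    have "real (card J) * pord p i J \<le> real i * \<alpha> \<longleftrightarrow> pord p i J \<le> real i * \<alpha> / real (card J)"
      using pos by (simp add: field_simps)
    also have "\<dots> \<longleftrightarrow> i \<le> card {j\<in>J. p j \<le> real i * \<alpha> / real (card J)}"
      using pord_le_iff[OF assms] i by auto
    also have "{j\<in>J. p j \<le> real i * \<alpha> / real (card J)} = {j\<in>J. real (card J) * p j \<le> real i * \<alpha>}"
      using pos by (auto simp: field_simps)
    finally show ?thesis .
  qed
  moreover have "card {j\<in>J. real (card J) * p j \<le> real i * \<alpha>} < i" if "card J < i" for i
    using that card_mono[OF assms, of "{j\<in>J. real (card J) * p j \<le> real i * \<alpha>}"] by auto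
  ultimately show ?thesis
    unfolding simes_rej_def simes_accept_def by (meson atLeastAtMost_iff not_le)
qed

lemma simes_accept_mono_factor:
  assumes "finite J" "\<forall>j\<in>J. 0 \<le> p j" "c \<le> c'" "simes_accept p \<alpha> c J"
  shows "simes_accept p \<alpha> c' J"
  unfolding simes_accept_def
proof (intro allI impI)
  fix i :: nat assume "1 \<le> i"
  have "{j\<in>J. c' * p j \<le> real i * \<alpha>} \<subseteq> {j\<in>J. c * p j \<le> real i * \<alpha>}"
    using assms(2,3) by (auto intro: order_trans[OF mult_right_mono])
  then have "card {j\<in>J. c' * p j \<le> real i * \<alpha>} \<le> card {j\<in>J. c * p j \<le> real i * \<alpha>}"
    using assms(1) by (intro card_mono) auto
  also have "\<dots> < i"
    using assms(4) \<open>1 \<le> i\<close> unfolding simes_accept_def by blast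
  finally show "card {j\<in>J. c' * p j \<le> real i * \<alpha>} < i" .
qed

lemma simes_accept_subset:
  assumes "finite J" "I \<subseteq> J" "simes_accept p \<alpha> c J"
  shows "simes_accept p \<alpha> c I"
  unfolding simes_accept_def
proof (intro allI impI)
  fix i :: nat assume "1 \<le> i"
  have "card {j\<in>I. c * p j \<le> real i * \<alpha>} \<le> card {j\<in>J. c * p j \<le> real i * \<alpha>}"
    using assms(1,2) by (intro card_mono) auto
  also have "\<dots> < i"
    using assms(3) \<open>1 \<le> i\<close> unfolding simes_accept_def by blast
  finally show "card {j\<in>I. c * p j \<le> real i * \<alpha>} < i" .
qed

lemma card_le_if_simes_accept:
  assumes "finite S" "I \<subseteq> S" "simes_accept p \<alpha> c I" "1 \<le> u"
  shows "card I \<le> u - 1 + card {j\<in>S. real u * \<alpha> < c * p j}"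
proof -
  have "card {j\<in>I. c * p j \<le> real u * \<alpha>} \<le> u - 1"
    using assms(3,4) unfolding simes_accept_def by fastforce
  moreover have "card {j\<in>I. \<not> c * p j \<le> real u * \<alpha>} \<le> card {j\<in>S. real u * \<alpha> < c * p j}"
    using assms(1,2) by (intro card_mono) auto
  moreover have "finite I" using assms(1,2) finite_subset by blast
  ultimately show ?thesis
    using card_filter_add_card_filter_not[of I "\<lambda>j. c * p j \<le> real u * \<alpha>"] by linarith
qed

definition top_set :: "('a \<Rightarrow> 'b::linorder) \<Rightarrow> 'a set \<Rightarrow> 'a set \<Rightarrow> bool" where
  "top_set f I S \<longleftrightarrow> I \<subseteq> S \<and> (\<forall>a\<in>I. \<forall>b\<in>S - I. f b \<le> f a)"

lemma ex_top_set:
  assumes "finite S" "k \<le> card S"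
  shows "\<exists>I. top_set f I S \<and> card I = k"
  using assms(2)
proof (induction k)
  case 0
  show ?case by (rule exI[of _ "{}"]) (simp add: top_set_def)
next
  case (Suc k)
  then obtain I where I: "top_set f I S" "card I = k" by auto
  have fin: "finite (S - I)" using assms(1) by blast
  moreover have "S - I \<noteq> {}"
    using I Suc.prems card_mono[OF assms(1), of I] by (auto simp: top_set_def)
  ultimately obtain y where "y \<in> S - I" "f y = Max (f ` (S - I))"
    using Max_in[of "f ` (S - I)"] by (metis finite_imageI image_iff image_is_empty)
  then have y: "y \<in> S - I" "\<forall>b\<in>S - I. f b \<le> f y"
    using fin by auto
  have "top_set f (insert y I) S"
    using I(1) y unfolding top_set_def by auto
  moreover have "card (insert y I) = Suc k"
    using I y assms(1) finite_subset[of I S] by (auto simp: top_set_def)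
  ultimately show ?case by blast
qed

lemma top_set_subset: "top_set f I S \<Longrightarrow> I \<subseteq> T \<Longrightarrow> T \<subseteq> S \<Longrightarrow> top_set f I T"
  by (auto simp: top_set_def)

lemma card_filter_top_set:
  assumes "finite S" "top_set f I S" "\<And>a b. f b \<le> f a \<Longrightarrow> Q b \<Longrightarrow> Q a"
  shows "card {j\<in>I. Q j} = min (card I) (card {j\<in>S. Q j})"
proof (cases "\<exists>b\<in>S - I. Q b")
  case True
  then have "{j\<in>I. Q j} = I"
    using assms(2,3) unfolding top_set_def by blast
  moreover have "card I \<le> card {j\<in>S. Q j}"
    using assms(1) \<open>{j\<in>I. Q j} = I\<close> assms(2) by (intro card_mono) (auto simp: top_set_def)
  ultimately show ?thesis by simp
next
  case False
  then have "{j\<in>I. Q j} = {j\<in>S. Q j}"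
    using assms(2) unfolding top_set_def by blast
  moreover have "card {j\<in>I. Q j} \<le> card I"
    using assms(1,2) finite_subset by (intro card_mono) (auto simp: top_set_def)
  ultimately show ?thesis by simp
qed

lemma simes_accept_top_set:
  assumes "finite U" "top_set p K U" "J \<subseteq> U" "card J = card K" "0 \<le> c"
    and "simes_accept p \<alpha> c J"
  shows "simes_accept p \<alpha> c K"
  unfolding simes_accept_def
proof (intro allI impI)
  fix i :: nat assume "1 \<le> i"
  let ?Q = "\<lambda>j. real i * \<alpha> < c * p j"
  have finK: "finite K" and finJ: "finite J"
    using assms(1-3) finite_subset unfolding top_set_def by blast+
  have "card {j\<in>K. ?Q j} = min (card K) (card {j\<in>U. ?Q j})"
    using assms(1,2,5) by (intro card_filter_top_set) (auto intro: order_less_le_trans mult_left_mono)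
  moreover have "card {j\<in>J. ?Q j} \<le> card J" "card {j\<in>J. ?Q j} \<le> card {j\<in>U. ?Q j}"
    using assms(1,3) finJ by (auto intro: card_mono)
  ultimately have "card {j\<in>K. \<not> ?Q j} \<le> card {j\<in>J. \<not> ?Q j}"
    using card_filter_add_card_filter_not[OF finK, of ?Q]
      card_filter_add_card_filter_not[OF finJ, of ?Q] assms(4) by linarith
  also have "\<dots> < i"
    using assms(6) \<open>1 \<le> i\<close> unfolding simes_accept_def not_less by blast
  finally show "card {j\<in>K. c * p j \<le> real i * \<alpha>} < i"
    by (simp add: not_less)
qed

lemma simes_accept_Un_top_set:
  assumes "finite L" "finite I" "top_set p K L" "card (I \<union> K) = card L" "0 \<le> c"
    and "simes_accept p \<alpha> c I" "simes_accept p \<alpha> c L"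
  shows "simes_accept p \<alpha> c (I \<union> K)"
  unfolding simes_accept_def
proof (intro allI impI)
  fix i :: nat assume "1 \<le> i"
  let ?Q = "\<lambda>j. c * p j \<le> real i * \<alpha>"
  have KL: "K \<subseteq> L" and finK: "finite K"
    using assms(1,3) finite_subset unfolding top_set_def by blast+
  show "card {j\<in>I \<union> K. ?Q j} < i"
  proof (cases "\<exists>a\<in>K. ?Q a")
    case False
    then have "card {j\<in>I \<union> K. ?Q j} \<le> card {j\<in>I. ?Q j}"
      using assms(2) by (intro card_mono) auto
    also have "\<dots> < i"
      using assms(6) \<open>1 \<le> i\<close> unfolding simes_accept_def by blast
    finally show ?thesis .
  next
    case True
    then obtain a where a: "a \<in> K" "?Q a" by blast
    \<comment> \<open>the elements of \<open>L - K\<close> have p-values at most \<open>p a\<close>, so they all count for \<open>L\<close>\<close>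
    have "L - K \<subseteq> {j\<in>L. ?Q j}"
      using assms(3,5) a unfolding top_set_def by (auto intro: order_trans[OF mult_left_mono])
    then have "card ((L - K) \<union> {j\<in>K. ?Q j}) \<le> card {j\<in>L. ?Q j}"
      using assms(1) KL by (intro card_mono) auto
    moreover have "card ((L - K) \<union> {j\<in>K. ?Q j}) = card (L - K) + card {j\<in>K. ?Q j}"
      using assms(1) finK by (intro card_Un_disjoint) auto
    moreover have "card (I - K) = card (L - K)"
      using card_Diff_add_card[OF assms(2) finK] card_Diff_add_card[OF assms(1) finK] assms(4) KL
      by (simp add: Un_absorb2)
    moreover have "card {j\<in>I \<union> K. ?Q j} \<le> card ((I - K) \<union> {j\<in>K. ?Q j})"
      using assms(2) finK by (intro card_mono) auto
    moreover have "card ((I - K) \<union> {j\<in>K. ?Q j}) \<le> card (I - K) + card {j\<in>K. ?Q j}"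
      by (rule card_Un_le)
    moreover have "card {j\<in>L. ?Q j} < i"
      using assms(7) \<open>1 \<le> i\<close> unfolding simes_accept_def by blast
    ultimately show ?thesis by linarith
  qed
qed

lemma ex_simes_accept_card:
  assumes "finite S" "0 \<le> c" "k \<le> card S"
    and "\<forall>u\<in>{1..card S}. k \<le> u - 1 + card {j\<in>S. real u * \<alpha> < c * p j}"
  shows "\<exists>I\<subseteq>S. card I = k \<and> simes_accept p \<alpha> c I"
proof -
  obtain I where I: "top_set p I S" "card I = k"
    using ex_top_set[OF assms(1,3)] by blast
  have finI: "finite I" using I(1) assms(1) finite_subset unfolding top_set_def by blast
  have "card {j\<in>I. \<not> real i * \<alpha> < c * p j} < i" if "1 \<le> i" for i
  proof -
    let ?g = "card {j\<in>S. real i * \<alpha> < c * p j}"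
    have "card {j\<in>I. real i * \<alpha> < c * p j} = min k ?g"
      using card_filter_top_set[OF assms(1) I(1)] I(2) assms(2)
      by (simp add: order_less_le_trans mult_left_mono)
    moreover have "k < i + ?g"
    proof (cases "i \<le> card S")
      case True
      then have "k \<le> i - 1 + ?g" using assms(4) that by simp
      then show ?thesis using that by linarith
    next
      case False
      then show ?thesis using assms(3) by linarith
    qed
    ultimately show ?thesis
      using card_filter_add_card_filter_not[OF finI, of "\<lambda>j. real i * \<alpha> < c * p j"] I(2) that
      by (auto simp: min_def split: if_splits)
  qed
  then have "simes_accept p \<alpha> c I"
    unfolding simes_accept_def by (simp add: not_less)
  then show ?thesis using I unfolding top_set_def by blast
qed

lemma finite_Kset [simp]: "finite (Kset m r s)"
  by (simp add: Kset_def)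

lemma Kset_0 [simp]: "Kset m r 0 = {}"
  by (simp add: Kset_def)

lemma Kset_Suc: "s < m \<Longrightarrow> Kset m r (Suc s) = insert (r (m - s)) (Kset m r s)"
proof -
  assume "s < m"
  then have "{m - Suc s + 1..m} = insert (m - s) {m - s + 1..m}" by auto
  then show ?thesis unfolding Kset_def by simp
qed

lemma Kset_mono: "s \<le> s' \<Longrightarrow> Kset m r s \<subseteq> Kset m r s'"
  unfolding Kset_def by (intro image_mono) auto

lemma h_alpha_le: "h_alpha m p \<alpha> r \<le> m"
  and not_simes_rej_Kset_h_alpha: "\<not> simes_rej p \<alpha> (Kset m r (h_alpha m p \<alpha> r))"
  and le_h_alpha: "k \<le> m \<Longrightarrow> \<not> simes_rej p \<alpha> (Kset m r k) \<Longrightarrow> k \<le> h_alpha m p \<alpha> r"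
proof -
  let ?H = "{i. i \<le> m \<and> \<not> simes_rej p \<alpha> (Kset m r i)}"
  have "0 \<in> ?H" by (simp add: simes_rej_def)
  then have "h_alpha m p \<alpha> r \<in> ?H"
    unfolding h_alpha_def by (intro Max_in) auto
  then show "h_alpha m p \<alpha> r \<le> m" "\<not> simes_rej p \<alpha> (Kset m r (h_alpha m p \<alpha> r))"
    by auto
  show "k \<le> h_alpha m p \<alpha> r" if "k \<le> m" "\<not> simes_rej p \<alpha> (Kset m r k)"
    unfolding h_alpha_def using that by (intro Max_ge) auto
qed

locale ordered_pvalues =
  fixes m :: nat and p :: "nat \<Rightarrow> real" and r :: "nat \<Rightarrow> nat"
  assumes perm: "bij_betw r {1..m} {1..m}"
    and sorted_along_r: "\<And>i j. 1 \<le> i \<Longrightarrow> i \<le> j \<Longrightarrow> j \<le> m \<Longrightarrow> p (r i) \<le> p (r j)"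
    and nonneg: "\<And>j. j \<in> {1..m} \<Longrightarrow> 0 \<le> p j"
begin

lemma card_Kset: "s \<le> m \<Longrightarrow> card (Kset m r s) = s"
proof -
  assume "s \<le> m"
  have "inj_on r {m - s + 1..m}"
    using bij_betw_imp_inj_on[OF perm] by (rule inj_on_subset) auto
  then show ?thesis
    using \<open>s \<le> m\<close> unfolding Kset_def by (simp add: card_image)
qed

lemma Kset_subset: "Kset m r s \<subseteq> {1..m}"
  using bij_betw_imp_surj_on[OF perm] unfolding Kset_def by auto

lemma Kset_top_set: "top_set p (Kset m r s) {1..m}"
  unfolding top_set_def
proof
  show "Kset m r s \<subseteq> {1..m}" by (rule Kset_subset)
  show "\<forall>a\<in>Kset m r s. \<forall>b\<in>{1..m} - Kset m r s. p b \<le> p a"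
  proof (intro ballI)
    fix a b assume a: "a \<in> Kset m r s" and b: "b \<in> {1..m} - Kset m r s"
    obtain t where t: "t \<in> {m - s + 1..m}" "a = r t" using a unfolding Kset_def by auto
    obtain u where u: "u \<in> {1..m}" "b = r u"
      using b bij_betw_imp_surj_on[OF perm] by (metis DiffD1 imageE)
    have "u \<notin> {m - s + 1..m}" using b u unfolding Kset_def by auto
    then show "p b \<le> p a" using sorted_along_r t u by auto
  qed
qed

lemma card_le_h_alpha:
  assumes "J \<subseteq> {1..m}" "\<not> simes_rej p \<alpha> J"
  shows "card J \<le> h_alpha m p \<alpha> r"
proof -
  let ?K = "Kset m r (card J)"
  have "finite J" using assms(1) finite_subset by blast
  have "card J \<le> m" using card_mono[OF _ assms(1)] by simp
  then have cK: "card ?K = card J" by (rule card_Kset)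
  have "simes_accept p \<alpha> (card J) J"
    using assms(2) not_simes_rej_iff_simes_accept[OF \<open>finite J\<close>] by blast
  then have "simes_accept p \<alpha> (card J) ?K"
    by (intro simes_accept_top_set[OF _ Kset_top_set assms(1)]) (simp_all add: cK)
  then have "\<not> simes_rej p \<alpha> ?K"
    using not_simes_rej_iff_simes_accept[of ?K] cK by simp
  then show ?thesis using le_h_alpha \<open>card J \<le> m\<close> by blast
qed

lemma ex_not_simes_rej_superset:
  assumes I: "I \<subseteq> {1..m}" and acc: "simes_accept p \<alpha> (h_alpha m p \<alpha> r) I"
  shows "\<exists>J. I \<subseteq> J \<and> J \<subseteq> {1..m} \<and> \<not> simes_rej p \<alpha> J"
proof -
  let ?h = "h_alpha m p \<alpha> r"
  have finI: "finite I" using I finite_subset by blast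
  show ?thesis
  proof (cases "?h \<le> card I")
    case True
    then have "simes_accept p \<alpha> (card I) I"
      using I nonneg by (intro simes_accept_mono_factor[OF finI _ _ acc]) auto
    then show ?thesis using I not_simes_rej_iff_simes_accept[OF finI] by blast
  next
    case False
    let ?K = "Kset m r"
    have cKh: "card (?K ?h) = ?h" by (rule card_Kset[OF h_alpha_le])
    \<comment> \<open>pad \<open>I\<close> with elements of largest p-value until it has \<open>h\<^sub>\<alpha>\<close> elements\<close>
    obtain s where s: "s \<le> ?h" "card (I \<union> ?K s) = ?h"
    proof -
      have "?h \<le> card (I \<union> ?K ?h)"
        using cKh finI by (metis card_mono finite_Kset finite_UnI sup_ge2)
      moreover have "card (I \<union> ?K (Suc s)) \<le> Suc (card (I \<union> ?K s))" if "s < ?h" for s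
        using that h_alpha_le[of m p \<alpha> r] finI by (simp add: Kset_Suc card_insert_if)
      ultimately show ?thesis
        using nat_ivt_Suc_le[of 0 ?h "\<lambda>s. card (I \<union> ?K s)" ?h] False that by auto
    qed
    have "simes_accept p \<alpha> ?h (?K ?h)"
      using not_simes_rej_Kset_h_alpha[where m = m and p = p and \<alpha> = \<alpha> and r = r]
        not_simes_rej_iff_simes_accept[of "?K ?h"] cKh by simp
    moreover have "top_set p (?K s) (?K ?h)"
      using Kset_top_set Kset_mono[OF s(1)] by (rule top_set_subset) (rule Kset_subset)
    ultimately have "simes_accept p \<alpha> ?h (I \<union> ?K s)"
      using s(2) cKh by (intro simes_accept_Un_top_set[OF _ finI _ _ _ acc]) auto
    then have "\<not> simes_rej p \<alpha> (I \<union> ?K s)"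
      using not_simes_rej_iff_simes_accept[of "I \<union> ?K s"] s(2) finI by simp
    moreover have "I \<union> ?K s \<subseteq> {1..m}"
      using I Kset_subset by blast
    ultimately show ?thesis by blast
  qed
qed

lemma not_closed_rej_iff_simes_accept:
  assumes "I \<subseteq> {1..m}"
  shows "\<not> closed_rej m p \<alpha> I \<longleftrightarrow> simes_accept p \<alpha> (h_alpha m p \<alpha> r) I"
proof
  assume "\<not> closed_rej m p \<alpha> I"
  then obtain J where J: "I \<subseteq> J" "J \<subseteq> {1..m}" "\<not> simes_rej p \<alpha> J"
    unfolding closed_rej_def by blast
  have finJ: "finite J" using J(2) finite_subset by blast
  have acc: "simes_accept p \<alpha> (card J) J"
    using J(3) not_simes_rej_iff_simes_accept[OF finJ] by blast
  have "\<forall>j\<in>J. 0 \<le> p j" using J(2) nonneg by blast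
  then have "simes_accept p \<alpha> (h_alpha m p \<alpha> r) J"
    by (rule simes_accept_mono_factor[OF finJ _ _ acc]) (simp add: card_le_h_alpha[OF J(2,3)])
  then show "simes_accept p \<alpha> (h_alpha m p \<alpha> r) I"
    using simes_accept_subset[OF finJ J(1)] by blast
next
  assume "simes_accept p \<alpha> (h_alpha m p \<alpha> r) I"
  then show "\<not> closed_rej m p \<alpha> I"
    using ex_not_simes_rej_superset[OF assms] unfolding closed_rej_def by blast
qed

lemma t_alpha_eq_Min:
  assumes "S \<subseteq> {1..m}" "S \<noteq> {}"
  shows "t_alpha m p \<alpha> S =
    Min ((\<lambda>u. u - 1 + card {j\<in>S. real u * \<alpha> < real (h_alpha m p \<alpha> r) * p j}) ` {1..card S})"
    (is "_ = Min (?G ` ?U)")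
proof -
  let ?h = "h_alpha m p \<alpha> r"
  have finS: "finite S" using assms(1) finite_subset by blast
  have "card S \<ge> 1" using finS assms(2) by (simp add: Suc_le_eq card_gt_0_iff)
  then have U: "finite (?G ` ?U)" "?G ` ?U \<noteq> {}" by auto
  have "?G 1 \<in> ?G ` ?U"
    by (rule imageI) (use \<open>card S \<ge> 1\<close> in simp)
  then have "Min (?G ` ?U) \<le> ?G 1"
    using U(1) by (rule Min_le[rotated])
  also have "\<dots> \<le> card S"
    using finS by (auto intro: card_mono)
  finally have le_card: "Min (?G ` ?U) \<le> card S" .
  have le_G: "\<forall>u\<in>?U. Min (?G ` ?U) \<le> ?G u"
    using U(1) by simp
  obtain I0 where I0: "I0 \<subseteq> S" "card I0 = Min (?G ` ?U)" "simes_accept p \<alpha> ?h I0"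
    using ex_simes_accept_card[OF finS _ le_card le_G] by auto
  have accept_iff: "\<not> closed_rej m p \<alpha> I \<longleftrightarrow> simes_accept p \<alpha> ?h I" if "I \<subseteq> S" for I
    using not_closed_rej_iff_simes_accept that assms(1) by blast
  show ?thesis
    unfolding t_alpha_def
  proof (rule Max_eqI)
    show "finite {card I |I. I \<subseteq> S \<and> \<not> closed_rej m p \<alpha> I}"
      by (rule finite_subset[of _ "{0..card S}"]) (auto intro: card_mono[OF finS])
    show "y \<le> Min (?G ` ?U)" if y: "y \<in> {card I |I. I \<subseteq> S \<and> \<not> closed_rej m p \<alpha> I}" for y
    proof -
      obtain I where I: "y = card I" "I \<subseteq> S" "simes_accept p \<alpha> ?h I"
        using y accept_iff by blast
      then have "\<forall>u\<in>?U. y \<le> ?G u"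
        using card_le_if_simes_accept[OF finS I(2,3)] by simp
      then show ?thesis using U by (simp add: Min_ge_iff)
    qed
    show "Min (?G ` ?U) \<in> {card I |I. I \<subseteq> S \<and> \<not> closed_rej m p \<alpha> I}"
      using I0 accept_iff[OF I0(1)] by (intro CollectI exI[of _ I0]) simp
  qed
qed

end

theorem theorem1:
  fixes m :: nat and p :: "nat \<Rightarrow> real" and \<alpha> :: real and r :: "nat \<Rightarrow> nat"
    and S :: "nat set"
  assumes p01: "\<forall>i\<in>{1..m}. 0 \<le> p i \<and> p i \<le> 1"
    and alpha01: "0 \<le> \<alpha>" "\<alpha> \<le> 1"
    and rperm: "bij_betw r {1..m} {1..m}"
    and rsorted: "\<forall>i j. 1 \<le> i \<and> i \<le> j \<and> j \<le> m \<longrightarrow> p (r i) \<le> p (r j)"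
    and S: "S \<subseteq> {1..m}" "S \<noteq> {}"
  shows "int (d_alpha m p \<alpha> S) =
    Max ((\<lambda>u. 1 - int u + int (card {i\<in>S. real (h_alpha m p \<alpha> r) * p i \<le> real u * \<alpha>}))
          ` {1..card S})"
proof -
  interpret ordered_pvalues m p r
    using p01 rperm rsorted by unfold_locales auto
  let ?h = "h_alpha m p \<alpha> r"
  define G where "G u = u - 1 + card {j\<in>S. real u * \<alpha> < real ?h * p j}" for u
  have finS: "finite S" using S(1) finite_subset by blast
  have "card S \<ge> 1" using finS S(2) by (simp add: Suc_le_eq card_gt_0_iff)
  have t: "t_alpha m p \<alpha> S = Min (G ` {1..card S})"
    unfolding G_def by (rule t_alpha_eq_Min[OF S])
  have "Min (G ` {1..card S}) \<le> G 1"
    using \<open>card S \<ge> 1\<close> by (intro Min_le) auto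
  also have "G 1 \<le> card S"
    using finS unfolding G_def by (auto intro: card_mono)
  finally have "int (d_alpha m p \<alpha> S) = int (card S) - int (Min (G ` {1..card S}))"
    unfolding d_alpha_def t by simp
  also have "int (Min (G ` {1..card S})) = Min ((\<lambda>u. int (G u)) ` {1..card S})"
    using \<open>card S \<ge> 1\<close> by (subst mono_Min_commute) (auto simp: mono_def image_image)
  also have "int (card S) - \<dots> = Max ((\<lambda>u. int (card S) - int (G u)) ` {1..card S})"
    using \<open>card S \<ge> 1\<close> by (subst Max_diff_eq_diff_Min) auto
  also have "\<dots> = Max ((\<lambda>u. 1 - int u + int (card {i\<in>S. real ?h * p i \<le> real u * \<alpha>})) ` {1..card S})"
  proof (intro arg_cong[where f = Max] image_cong refl)
    fix u assume "u \<in> {1..card S}"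
    then have "int (G u) = int u - 1 + int (card {j\<in>S. real u * \<alpha> < real ?h * p j})"
      unfolding G_def by (simp add: of_nat_diff)
    moreover have "card {i\<in>S. real ?h * p i \<le> real u * \<alpha>} + card {j\<in>S. real u * \<alpha> < real ?h * p j} = card S"
      using card_filter_add_card_filter_not[OF finS, of "\<lambda>i. real ?h * p i \<le> real u * \<alpha>"]
      by (simp add: not_le)
    ultimately show "int (card S) - int (G u) = 1 - int u + int (card {i\<in>S. real ?h * p i \<le> real u * \<alpha>})"
      by linarith
  qed
  finally show ?thesis .
qed

end
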